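(* For every constant $c>0$ there is a constant $c'>0$ such that the following holds. Let $G$ be a finite simple graph with maximum degree $d\ge 1$, and let $D(G)$ be a straight-line drawing of $G$ in the base plane $\mathcal{P}_1=\{z=0\}\subset\mathbb{R}^3$ with distinct vertex positions and angular resolution at least $c/d$ (i.e., any two distinct edges incident to a common vertex form an angle at least $c/d$ in $D(G)$). Then there is a 3D arc diagram drawing of $G$ with base plane $\mathcal{P}_1$ and with the same vertex positions as $D(G)$ (so every arc projects perpendicularly onto the corresponding straight-line edge of $D(G)$) whose angular resolution is at least $c'/\sqrt{d}$.
   Context: A 3D arc diagram drawing of $G$ with base plane $\mathcal{P}_1=\{z=0\}$ is a placement of the vertices at distinct points of $\mathcal{P}_1$, together with, for each edge $e=(a,b)$, a circular arc (a contiguous subset of a circle; a straight segment is allowed as the degenerate case) with endpoints at the positions of $a$ and $b$, such that: the arc lies in the plane $\mathcal{P}_2$ containing the segment $ab$ and perpendicular to $\mathcal{P}_1$ (so the arc projects perpendicularly onto the segment $ab$ in $\mathcal{P}_1$); all arcs lie in the closed half-space $z\ge 0$; and the arc forms the same angle $\alpha_e\in[0,\pi/2]$ with the segment $ab$ at both of its endpoints. The angle between two arcs incident to a common vertex $v$ is the angle in $[0,\pi]$ between their tangent rays at $v$ (directed into the arcs). The angular resolution of the drawing is the minimum of this angle over all vertices $v$ and all pairs of distinct edges incident to $v$. The angular resolution of a 2D straight-line drawing is defined analogously using the segments themselves. *)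

theory Defs
  imports "HOL-Analysis.Analysis"
begin

definition vec_angle :: "real^3 \<Rightarrow> real^3 \<Rightarrow> real" where
  "vec_angle x y = arccos ((x \<bullet> y) / (norm x * norm y))"

definition simple_graph :: "nat set \<Rightarrow> (nat \<Rightarrow> nat \<Rightarrow> bool) \<Rightarrow> bool" where
  "simple_graph V E \<longleftrightarrow> finite V \<and> (\<forall>u w. E u w \<longrightarrow> u \<in> V \<and> w \<in> V \<and> u \<noteq> w \<and> E w u)"

definition degree :: "nat set \<Rightarrow> (nat \<Rightarrow> nat \<Rightarrow> bool) \<Rightarrow> nat \<Rightarrow> nat" where
  "degree V E v = card {u \<in> V. E v u}"

definition max_degree :: "nat set \<Rightarrow> (nat \<Rightarrow> nat \<Rightarrow> bool) \<Rightarrow> nat" where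
  "max_degree V E = Max (degree V E ` V)"

definition in_base_plane :: "real^3 \<Rightarrow> bool" where
  "in_base_plane x \<longleftrightarrow> x $ 3 = 0"

definition ez :: "real^3" where
  "ez = axis 3 1"

definition straight_ang_res_ge ::
  "nat set \<Rightarrow> (nat \<Rightarrow> nat \<Rightarrow> bool) \<Rightarrow> (nat \<Rightarrow> real^3) \<Rightarrow> real \<Rightarrow> bool" where
  "straight_ang_res_ge V E p r \<longleftrightarrow>
     (\<forall>v\<in>V. \<forall>u w. E v u \<and> E v w \<and> u \<noteq> w \<longrightarrow>
        vec_angle (p u - p v) (p w - p v) \<ge> r)"

(* The circular arc of edge (a,b) with endpoint angle al in [0,pi/2]:
   it lies in the vertical plane through a b, in z >= 0, and meets the
   chord ab at angle al at both ends.
   For 0 < al <= pi/2 it is the minor arc of the circle of radius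
   R = |b-a|/(2 sin al) centred at m - R cos al ez (m = midpoint). *)
definition arc_curve :: "real^3 \<Rightarrow> real^3 \<Rightarrow> real \<Rightarrow> real \<Rightarrow> real^3" where
  "arc_curve a b al t =
     (if al = 0 then a + t *\<^sub>R (b - a)
      else (let L = norm (b - a); u = (1 / L) *\<^sub>R (b - a);
                R = L / (2 * sin al); m = (1/2) *\<^sub>R (a + b);
                th = (2 * t - 1) * al
            in m + (R * sin th) *\<^sub>R u + (R * (cos th - cos al)) *\<^sub>R ez))"

(* Unit tangent ray at endpoint a, directed into the arc of edge (a,b)
   with endpoint angle al: it makes angle al with the segment ab and lies
   in the vertical plane through a b, pointing upward. *)
definition arc_tangent :: "real^3 \<Rightarrow> real^3 \<Rightarrow> real \<Rightarrow> real^3" where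
  "arc_tangent a b al =
     (cos al / norm (b - a)) *\<^sub>R (b - a) + sin al *\<^sub>R ez"

(* A 3D arc diagram drawing with base plane P1, vertex positions p, and
   endpoint angles al (al u w = al w u for edge {u,w}) has angular
   resolution at least r. *)
definition arc_diagram :: "(nat \<Rightarrow> nat \<Rightarrow> bool) \<Rightarrow> (nat \<Rightarrow> nat \<Rightarrow> real) \<Rightarrow> bool" where
  "arc_diagram E al \<longleftrightarrow>
     (\<forall>u w. E u w \<longrightarrow> al u w = al w u \<and> 0 \<le> al u w \<and> al u w \<le> pi / 2)"

definition arc_ang_res_ge ::
  "nat set \<Rightarrow> (nat \<Rightarrow> nat \<Rightarrow> bool) \<Rightarrow> (nat \<Rightarrow> real^3) \<Rightarrow> (nat \<Rightarrow> nat \<Rightarrow> real) \<Rightarrow> real \<Rightarrow> bool" where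
  "arc_ang_res_ge V E p al r \<longleftrightarrow>
     (\<forall>v\<in>V. \<forall>u w. E v u \<and> E v w \<and> u \<noteq> w \<longrightarrow>
        vec_angle (arc_tangent (p v) (p u) (al v u))
                  (arc_tangent (p v) (p w) (al v w)) \<ge> r)"

end

theory Submission
  imports Defs
begin

text \<open>
  Let \<open>N \<approx> \<surd>d\<close>. An edge leaving a vertex in planar direction \<open>x\<close> with argument \<open>\<phi>\<close> is drawn
  as the arc whose endpoint angle has sine \<open>frac (N\<phi>/\<pi>) / 2 \<in> [0, 1/2)\<close>; reversing \<open>x\<close>
  shifts \<open>N\<phi>/\<pi>\<close> by the integer \<open>\<plusminus>N\<close>, so both ends of an edge get the same angle.
  Consider two edges at a vertex with planar angle \<open>\<theta> \<ge> c/d\<close>. If \<open>\<theta> \<ge> \<pi>/(2N)\<close>, the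
  horizontal parts of the two unit tangents, which have length at least \<open>3/4\<close>, are already
  \<open>\<Omega>(1/N)\<close> apart. If \<open>\<theta> < \<pi>/(2N)\<close>, the two values \<open>N\<phi>/\<pi>\<close> differ modulo 1 by exactly
  \<open>N\<theta>/\<pi> < 1/2\<close>, so the heights of the tangents differ by \<open>N\<theta>/(2\<pi>) \<ge> c/(2\<pi>\<surd>d)\<close>.
  Either way the chord between the unit tangents, which bounds their angle from below, is
  \<open>\<Omega>(1/\<surd>d)\<close>.
\<close>

lemma sin_ge_half_self:
  fixes x :: real
  assumes "0 \<le> x" "x \<le> pi / 3"
  shows "x / 2 \<le> sin x"
proof (cases "x = 0")
  case False
  then have "0 < x" using assms by simp
  from MVT2[OF this DERIV_sin] obtain z where z: "0 < z" "z < x" "sin x - sin 0 = (x - 0) * cos z"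
    by blast
  have "cos (pi / 3) \<le> cos z"
    using z assms by (intro cos_monotone_0_pi_le) auto
  then have "x * (1 / 2) \<le> x * cos z"
    using \<open>0 < x\<close> by (simp add: cos_60)
  then show ?thesis using z by simp
qed simp

lemma abs_le_frac_diff:
  fixes x y t :: real
  assumes "x - y = of_int m + t" "\<bar>t\<bar> \<le> 1 / 2"
  shows "\<bar>t\<bar> \<le> \<bar>frac x - frac y\<bar>"
proof -
  define k where "k = m - \<lfloor>x\<rfloor> + \<lfloor>y\<rfloor>"
  have k: "frac x - frac y = t + of_int k"
    using assms(1) by (simp add: frac_def k_def)
  have "\<bar>frac x - frac y\<bar> < 1"
    using frac_lt_1[of x] frac_lt_1[of y] frac_ge_0[of x] frac_ge_0[of y] by linarith
  then have "k = 0 \<or> 1 \<le> \<bar>real_of_int k\<bar> \<and> \<bar>t\<bar> \<le> 1 / 2"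
    using assms(2) by linarith
  then show ?thesis using k by linarith
qed

lemma vec_angle_cos_bounds:
  fixes x y :: "real^3"
  assumes "x \<noteq> 0" "y \<noteq> 0"
  shows "cos (vec_angle x y) = x \<bullet> y / (norm x * norm y)"
    and "0 \<le> vec_angle x y" "vec_angle x y \<le> pi"
proof -
  define t where "t = x \<bullet> y / (norm x * norm y)"
  have "\<bar>x \<bullet> y\<bar> \<le> norm x * norm y" by (rule Cauchy_Schwarz_ineq2)
  then have "\<bar>t\<bar> \<le> 1"
    using assms unfolding t_def by (subst abs_divide) (simp add: divide_le_eq_1)
  then have "-1 \<le> t" "t \<le> 1" by linarith+
  then show "cos (vec_angle x y) = t" "0 \<le> vec_angle x y" "vec_angle x y \<le> pi"
    using arccos_bounded[of t] cos_arccos[of t] unfolding vec_angle_def t_def[symmetric] by auto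
qed

lemma norm_sgn_diff:
  fixes x y :: "real^3"
  assumes "x \<noteq> 0" "y \<noteq> 0"
  shows "norm (sgn x - sgn y) = 2 * sin (vec_angle x y / 2)"
proof -
  define th where "th = vec_angle x y"
  note th = vec_angle_cos_bounds[OF assms, folded th_def]
  have "sgn x \<bullet> sgn y = cos th"
    by (simp add: th sgn_div_norm divide_inverse)
  then have "norm (sgn x - sgn y) ^ 2 = 2 - 2 * cos th"
    using dot_norm_neg[of "sgn x" "sgn y"] assms by (simp add: norm_sgn)
  also have "\<dots> = (2 * sin (th / 2)) ^ 2"
    using cos_double_sin[of "th / 2"] by (simp add: power_mult_distrib)
  finally have "norm (sgn x - sgn y) ^ 2 = (2 * sin (th / 2)) ^ 2" .
  moreover have "0 \<le> 2 * sin (th / 2)"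
    using th by (simp add: sin_ge_zero)
  ultimately show ?thesis
    unfolding th_def by (metis norm_ge_zero power2_eq_iff_nonneg)
qed

lemma norm_sgn_diff_ge:
  fixes x y :: "real^3"
  assumes "x \<noteq> 0" "y \<noteq> 0" "0 \<le> e" "e \<le> 2 * pi / 3" "e \<le> vec_angle x y"
  shows "e / 2 \<le> norm (sgn x - sgn y)"
proof -
  have "e / 4 \<le> sin (e / 2)"
    using sin_ge_half_self[of "e / 2"] assms by simp
  also have "\<dots> \<le> sin (vec_angle x y / 2)"
    using assms vec_angle_cos_bounds[OF assms(1,2)] by (intro sin_monotone_2pi_le) auto
  finally show ?thesis
    using norm_sgn_diff[OF assms(1,2)] by simp
qed

lemma norm_diff_le_vec_angle:
  fixes u v :: "real^3"
  assumes "norm u = 1" "norm v = 1"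
  shows "norm (u - v) \<le> vec_angle u v"
proof -
  have "u \<noteq> 0" "v \<noteq> 0" "sgn u = u" "sgn v = v"
    using assms by (auto simp: sgn_div_norm)
  then have "norm (u - v) = 2 * sin (vec_angle u v / 2)"
    using norm_sgn_diff by metis
  also have "\<dots> \<le> vec_angle u v"
    using sin_x_le_x[of "vec_angle u v / 2"] vec_angle_cos_bounds \<open>u \<noteq> 0\<close> \<open>v \<noteq> 0\<close>
    by simp
  finally show ?thesis .
qed

lemma norm_scaleR_diff_units_sq:
  fixes u v :: "'a::real_inner"
  assumes "norm u = 1" "norm v = 1"
  shows "norm (a *\<^sub>R u - b *\<^sub>R v) ^ 2 = (a - b) ^ 2 + a * b * norm (u - v) ^ 2"
proof -
  have "u \<bullet> u = 1" "v \<bullet> v = 1"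
    using assms by (simp_all add: norm_eq_1)
  then have lhs: "norm (a *\<^sub>R u - b *\<^sub>R v) ^ 2 = a ^ 2 - 2 * a * b * (u \<bullet> v) + b ^ 2"
    and rhs: "norm (u - v) ^ 2 = 2 - 2 * (u \<bullet> v)"
    unfolding power2_norm_eq_inner
    by (simp_all add: inner_diff_left inner_diff_right inner_commute[of v u] power2_eq_square
        algebra_simps)
  show ?thesis
    unfolding lhs rhs by (simp add: power2_eq_square algebra_simps)
qed

lemma norm_add_vertical_sq:
  fixes h :: "real^3"
  assumes "h $ 3 = 0"
  shows "norm (h + z *\<^sub>R ez) ^ 2 = norm h ^ 2 + z ^ 2"
proof -
  have "h \<bullet> ez = 0" "ez \<bullet> ez = 1"
    using assms by (simp_all add: ez_def inner_axis)
  then show ?thesis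
    unfolding power2_norm_eq_inner
    by (simp add: inner_add_left inner_add_right inner_commute[of ez h] power2_eq_square)
qed

definition plane_arg :: "real^3 \<Rightarrow> real" where
  "plane_arg x = Arg (Complex (x $ 1) (x $ 2))"

lemma plane_polar:
  fixes x :: "real^3"
  assumes "x $ 3 = 0" "x \<noteq> 0"
  shows "x $ 1 = norm x * cos (plane_arg x)" "x $ 2 = norm x * sin (plane_arg x)"
proof -
  define z where "z = Complex (x $ 1) (x $ 2)"
  have "norm x = sqrt ((x $ 1)\<^sup>2 + (x $ 2)\<^sup>2)"
    using assms(1) by (simp add: norm_eq_sqrt_inner inner_vec_def sum_3 power2_eq_square)
  then have nz: "norm x = cmod z"
    by (simp add: z_def cmod_def)
  then have "z \<noteq> 0"
    using assms(2) by auto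
  then show "x $ 1 = norm x * cos (plane_arg x)" "x $ 2 = norm x * sin (plane_arg x)"
    by (simp_all add: nz plane_arg_def z_def[symmetric] cos_Arg sin_Arg) (simp_all add: z_def)
qed

lemma vec_angle_plane_arg:
  fixes x y :: "real^3"
  assumes "x $ 3 = 0" "y $ 3 = 0" "x \<noteq> 0" "y \<noteq> 0"
  obtains k :: int where "vec_angle x y = \<bar>plane_arg x - plane_arg y - of_int k * (2 * pi)\<bar>"
proof -
  have "x \<bullet> y = norm x * norm y * cos (plane_arg x - plane_arg y)"
    using assms plane_polar[of x] plane_polar[of y]
    by (simp add: inner_vec_def sum_3 cos_diff algebra_simps)
  then have "cos (vec_angle x y) = cos (plane_arg x - plane_arg y)"
    using assms by (simp add: vec_angle_cos_bounds)
  then have "vec_angle x y = arccos (cos (plane_arg x - plane_arg y))"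
    using assms vec_angle_cos_bounds[of x y] by (metis arccos_cos)
  with arccos_cos_eq_abs_2pi that show ?thesis by metis
qed

definition endpoint_sine :: "nat \<Rightarrow> real^3 \<Rightarrow> real" where
  "endpoint_sine N x = frac (real N * plane_arg x / pi) / 2"

lemma endpoint_sine_bounds: "0 \<le> endpoint_sine N x" "endpoint_sine N x < 1 / 2"
  unfolding endpoint_sine_def using frac_ge_0 frac_lt_1 by auto

lemma endpoint_sine_uminus:
  fixes x :: "real^3"
  assumes "x $ 3 = 0" "x \<noteq> 0"
  shows "endpoint_sine N (- x) = endpoint_sine N x"
proof -
  have "Complex ((- x) $ 1) ((- x) $ 2) = - Complex (x $ 1) (x $ 2)"
    by (simp add: complex_eq_iff)
  moreover have "Complex (x $ 1) (x $ 2) \<noteq> 0"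
    using assms by (auto simp: complex_eq_iff vec_eq_iff forall_3)
  ultimately obtain k :: int where "plane_arg (- x) = plane_arg x + of_int k * pi"
    unfolding plane_arg_def using Arg_minus
    by (metis add_uminus_conv_diff mult.left_neutral mult_minus_left of_int_1 of_int_minus)
  then have "real N * plane_arg (- x) / pi = real N * plane_arg x / pi + of_int (k * int N)"
    by (simp add: field_simps)
  then show ?thesis
    unfolding endpoint_sine_def by (simp only: frac_add_of_int_right)
qed

lemma endpoint_sine_diff_ge:
  fixes x y :: "real^3"
  assumes "x $ 3 = 0" "y $ 3 = 0" "x \<noteq> 0" "y \<noteq> 0"
    and small: "real N * vec_angle x y \<le> pi / 2"
  shows "real N * vec_angle x y / (2 * pi) \<le> \<bar>endpoint_sine N x - endpoint_sine N y\<bar>"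
proof -
  obtain k :: int where k: "vec_angle x y = \<bar>plane_arg x - plane_arg y - of_int k * (2 * pi)\<bar>"
    using vec_angle_plane_arg[OF assms(1-4)] .
  define t where "t = real N * (plane_arg x - plane_arg y - of_int k * (2 * pi)) / pi"
  have t: "\<bar>t\<bar> = real N * vec_angle x y / pi"
    by (simp add: t_def k abs_mult)
  have "real N * plane_arg x / pi - real N * plane_arg y / pi = of_int (2 * k * int N) + t"
    by (simp add: t_def field_simps)
  moreover have "\<bar>t\<bar> \<le> 1 / 2"
    using small by (simp add: t field_simps)
  ultimately have "\<bar>t\<bar> \<le> \<bar>frac (real N * plane_arg x / pi) - frac (real N * plane_arg y / pi)\<bar>"
    by (rule abs_le_frac_diff)
  then show ?thesis
    unfolding endpoint_sine_def t by (simp add: diff_divide_distrib[symmetric] field_simps)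
qed

definition tangent_dir :: "real \<Rightarrow> real^3 \<Rightarrow> real^3" where
  "tangent_dir s x = sqrt (1 - s\<^sup>2) *\<^sub>R sgn x + s *\<^sub>R ez"

lemma arc_tangent_arcsin:
  assumes "\<bar>s\<bar> \<le> 1"
  shows "arc_tangent a b (arcsin s) = tangent_dir s (b - a)"
  using assms by (simp add: arc_tangent_def tangent_dir_def cos_arcsin sgn_div_norm divide_inverse)

lemma norm_tangent_dir:
  fixes x :: "real^3"
  assumes "x $ 3 = 0" "x \<noteq> 0" "\<bar>s\<bar> \<le> 1"
  shows "norm (tangent_dir s x) = 1"
proof -
  have "0 \<le> 1 - s\<^sup>2"
    using assms(3) by (simp add: abs_square_le_1)
  moreover have "sgn x $ 3 = 0"
    using assms by (simp add: sgn_div_norm)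
  ultimately have "norm (tangent_dir s x) ^ 2 = 1"
    using assms unfolding tangent_dir_def by (simp add: norm_add_vertical_sq norm_sgn)
  then show ?thesis
    by (metis norm_ge_zero power2_eq_1_iff abs_of_nonneg abs_neg_one abs_minus_cancel)
qed

lemma norm_tangent_dir_diff_ge:
  fixes x y :: "real^3"
  assumes "x $ 3 = 0" "y $ 3 = 0" "x \<noteq> 0" "y \<noteq> 0"
    and "0 \<le> s" "s \<le> 1 / 2" "0 \<le> t" "t \<le> 1 / 2"
  shows "3 / 4 * norm (sgn x - sgn y) \<le> norm (tangent_dir s x - tangent_dir t y)"
    and "\<bar>s - t\<bar> \<le> norm (tangent_dir s x - tangent_dir t y)"
proof -
  define cs where "cs = sqrt (1 - s\<^sup>2)"
  define ct where "ct = sqrt (1 - t\<^sup>2)"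
  have "s\<^sup>2 \<le> (1 / 2)\<^sup>2" "t\<^sup>2 \<le> (1 / 2)\<^sup>2"
    using assms(5-8) by (simp_all only: power_mono)
  then have "(3 / 4)\<^sup>2 \<le> 1 - s\<^sup>2" "(3 / 4)\<^sup>2 \<le> 1 - t\<^sup>2"
    by (simp_all add: power2_eq_square)
  then have "3 / 4 \<le> cs" "3 / 4 \<le> ct"
    unfolding cs_def ct_def by (simp_all only: real_le_rsqrt)
  then have "3 / 4 * (3 / 4) \<le> cs * ct"
    by (intro mult_mono) auto
  then have cst: "9 / 16 * norm (sgn x - sgn y) ^ 2 \<le> cs * ct * norm (sgn x - sgn y) ^ 2"
    by (intro mult_right_mono) auto
  have "tangent_dir s x - tangent_dir t y = (cs *\<^sub>R sgn x - ct *\<^sub>R sgn y) + (s - t) *\<^sub>R ez"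
    by (simp add: tangent_dir_def cs_def ct_def algebra_simps)
  then have "norm (tangent_dir s x - tangent_dir t y) ^ 2
      = (cs - ct)\<^sup>2 + cs * ct * norm (sgn x - sgn y) ^ 2 + (s - t)\<^sup>2"
    using assms(1-4) norm_add_vertical_sq[of "cs *\<^sub>R sgn x - ct *\<^sub>R sgn y" "s - t"]
      norm_scaleR_diff_units_sq[of "sgn x" "sgn y" cs ct]
    by (simp add: norm_sgn sgn_div_norm)
  moreover have "(3 / 4 * norm (sgn x - sgn y)) ^ 2 = 9 / 16 * norm (sgn x - sgn y) ^ 2"
    by (simp add: power_mult_distrib power2_eq_square)
  moreover have "0 \<le> 9 / 16 * norm (sgn x - sgn y) ^ 2"
    by simp
  ultimately have "(3 / 4 * norm (sgn x - sgn y)) ^ 2 \<le> norm (tangent_dir s x - tangent_dir t y) ^ 2"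
    and "\<bar>s - t\<bar> ^ 2 \<le> norm (tangent_dir s x - tangent_dir t y) ^ 2"
    using cst zero_le_power2[of "cs - ct"] zero_le_power2[of "s - t"] power2_abs[of "s - t"]
    by linarith+
  then show "3 / 4 * norm (sgn x - sgn y) \<le> norm (tangent_dir s x - tangent_dir t y)"
    and "\<bar>s - t\<bar> \<le> norm (tangent_dir s x - tangent_dir t y)"
    by (auto intro: power2_le_imp_le)
qed

lemma vec_angle_tangent_dirs_ge:
  fixes x y :: "real^3"
  assumes "x $ 3 = 0" "y $ 3 = 0" "x \<noteq> 0" "y \<noteq> 0" "N > 0"
  shows "min (3 * pi / (16 * real N)) (real N * vec_angle x y / (2 * pi))
    \<le> vec_angle (tangent_dir (endpoint_sine N x) x) (tangent_dir (endpoint_sine N y) y)"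
    (is "?r \<le> vec_angle ?Tx ?Ty")
proof -
  note sines = endpoint_sine_bounds[of N x] endpoint_sine_bounds[of N y]
  note diff_ge = norm_tangent_dir_diff_ge[OF assms(1-4), of "endpoint_sine N x" "endpoint_sine N y"]
  have "?r \<le> norm (?Tx - ?Ty)"
  proof (cases "real N * vec_angle x y \<le> pi / 2")
    \<comment> \<open>small planar angle: the heights separate; large planar angle: the horizontal parts do\<close>
    case True
    then show ?thesis
      using endpoint_sine_diff_ge[OF assms(1-4) True] diff_ge(2) sines by linarith
  next
    case False
    then have "pi / (2 * real N) \<le> vec_angle x y"
      using assms(5) by (simp add: field_simps)
    moreover have "pi / (2 * real N) \<le> 2 * pi / 3"
      using assms(5) by (simp add: field_simps)
    ultimately have "pi / (4 * real N) \<le> norm (sgn x - sgn y)"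
      using norm_sgn_diff_ge[OF assms(3,4), of "pi / (2 * real N)"] by simp
    then show ?thesis
      using diff_ge(1) sines by (simp add: field_simps)
  qed
  also have "\<dots> \<le> vec_angle ?Tx ?Ty"
    using assms sines by (intro norm_diff_le_vec_angle norm_tangent_dir) auto
  finally show ?thesis .
qed

definition arc_angles :: "nat \<Rightarrow> (nat \<Rightarrow> real^3) \<Rightarrow> nat \<Rightarrow> nat \<Rightarrow> real" where
  "arc_angles N p u w = arcsin (endpoint_sine N (p w - p u))"

lemma edge_vector_horizontal:
  assumes "simple_graph V E" "\<forall>v\<in>V. in_base_plane (p v)" "inj_on p V" "E u w"
  shows "(p w - p u) $ 3 = 0" "p w - p u \<noteq> 0"
proof -
  have "u \<in> V" "w \<in> V" "u \<noteq> w"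
    using assms(1,4) unfolding simple_graph_def by auto
  then show "(p w - p u) $ 3 = 0" "p w - p u \<noteq> 0"
    using assms(2,3) unfolding in_base_plane_def inj_on_def by auto
qed

lemma arc_diagram_arc_angles:
  assumes "simple_graph V E" "\<forall>v\<in>V. in_base_plane (p v)" "inj_on p V"
  shows "arc_diagram E (arc_angles N p)"
  unfolding arc_diagram_def
proof (intro allI impI conjI)
  fix u w
  assume "E u w"
  note horizontal = edge_vector_horizontal[OF assms this]
  have "p u - p w = - (p w - p u)"
    by simp
  then show "arc_angles N p u w = arc_angles N p w u"
    unfolding arc_angles_def using endpoint_sine_uminus[OF horizontal] by simp
  show "0 \<le> arc_angles N p u w" "arc_angles N p u w \<le> pi / 2"
    unfolding arc_angles_def
    using endpoint_sine_bounds[of N "p w - p u"] arcsin_ubound[of "endpoint_sine N (p w - p u)"]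
    by (auto intro: arcsin_nonneg)
qed

lemma arc_ang_res_arc_angles:
  assumes "simple_graph V E" "\<forall>v\<in>V. in_base_plane (p v)" "inj_on p V"
    and "straight_ang_res_ge V E p th" "N > 0"
    and "r \<le> min (3 * pi / (16 * real N)) (real N * th / (2 * pi))"
  shows "arc_ang_res_ge V E p (arc_angles N p) r"
  unfolding arc_ang_res_ge_def
proof (intro ballI allI impI)
  fix v u w
  assume "v \<in> V" and edges: "E v u \<and> E v w \<and> u \<noteq> w"
  then have "th \<le> vec_angle (p u - p v) (p w - p v)"
    using assms(4) unfolding straight_ang_res_ge_def by blast
  then have "real N * th / (2 * pi) \<le> real N * vec_angle (p u - p v) (p w - p v) / (2 * pi)"
    by (intro divide_right_mono mult_left_mono) auto
  then have "r \<le> min (3 * pi / (16 * real N)) (real N * vec_angle (p u - p v) (p w - p v) / (2 * pi))"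
    using assms(6) by linarith
  also have "\<dots> \<le> vec_angle (tangent_dir (endpoint_sine N (p u - p v)) (p u - p v))
      (tangent_dir (endpoint_sine N (p w - p v)) (p w - p v))"
    using edges assms(5) edge_vector_horizontal[OF assms(1-3)]
    by (intro vec_angle_tangent_dirs_ge) auto
  finally show "r \<le> vec_angle (arc_tangent (p v) (p u) (arc_angles N p v u))
      (arc_tangent (p v) (p w) (arc_angles N p v w))"
    unfolding arc_angles_def
    using endpoint_sine_bounds[of N "p u - p v"] endpoint_sine_bounds[of N "p w - p v"]
    by (subst (1 2) arc_tangent_arcsin) auto
qed

lemma resolution_constant_le:
  fixes s n c :: real
  assumes "1 \<le> s" "s \<le> n" "n \<le> 2 * s" "0 < c"
  shows "min (1 / 4) (c / (2 * pi)) / s \<le> min (3 * pi / (16 * n)) (n * (c / s\<^sup>2) / (2 * pi))"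
proof -
  have "n * 4 \<le> pi * (s * 3)"
    using mult_right_mono[of 3 pi "s * 3"] pi_gt3 assms by linarith
  then have "1 / (4 * s) \<le> 3 * pi / (16 * n)"
    using assms by (simp add: field_simps)
  moreover have "c / (2 * pi * s) \<le> n * (c / s\<^sup>2) / (2 * pi)"
    using assms pi_gt_zero by (simp add: field_simps power2_eq_square mult_right_mono)
  ultimately show ?thesis
    using assms by (simp add: min_divide_distrib_right min.coboundedI1 min.coboundedI2)
qed

lemma arc_diagram_with_sqrt_resolution:
  assumes "c > 0" "simple_graph V E" "d \<ge> 1" "\<forall>v\<in>V. in_base_plane (p v)" "inj_on p V"
    and "straight_ang_res_ge V E p (c / real d)"
  defines "N \<equiv> nat \<lceil>sqrt (real d)\<rceil>"
  shows "arc_diagram E (arc_angles N p)"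
    and "arc_ang_res_ge V E p (arc_angles N p) (min (1 / 4) (c / (2 * pi)) / sqrt (real d))"
proof -
  have "1 \<le> sqrt (real d)"
    using assms(3) by simp
  then have "sqrt (real d) \<le> real N" "real N \<le> 2 * sqrt (real d)" "N > 0"
    unfolding N_def by linarith+
  then have "min (1 / 4) (c / (2 * pi)) / sqrt (real d)
      \<le> min (3 * pi / (16 * real N)) (real N * (c / real d) / (2 * pi))"
    using resolution_constant_le[of "sqrt (real d)" "real N" c] \<open>1 \<le> sqrt (real d)\<close> assms(1)
    by simp
  then show "arc_ang_res_ge V E p (arc_angles N p) (min (1 / 4) (c / (2 * pi)) / sqrt (real d))"
    using arc_ang_res_arc_angles assms(2,4-6) \<open>N > 0\<close> by blast
  show "arc_diagram E (arc_angles N p)"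
    using arc_diagram_arc_angles assms(2,4,5) by blast
qed

theorem theorem4:
  "\<forall>c::real. c > 0 \<longrightarrow> (\<exists>c'::real. c' > 0 \<and>
     (\<forall>V E (p :: nat \<Rightarrow> real^3) (d :: nat).
        simple_graph V E \<longrightarrow> d = max_degree V E \<longrightarrow> d \<ge> 1 \<longrightarrow>
        (\<forall>v\<in>V. in_base_plane (p v)) \<longrightarrow> inj_on p V \<longrightarrow>
        straight_ang_res_ge V E p (c / real d) \<longrightarrow>
        (\<exists>al. arc_diagram E al \<and> arc_ang_res_ge V E p al (c' / sqrt (real d)))))"
  (is "\<forall>c. c > 0 \<longrightarrow> (\<exists>c'. c' > 0 \<and> ?P c c')")
proof (intro allI impI)
  fix c :: real
  assume "c > 0"
  then have "min (1 / 4) (c / (2 * pi)) > 0"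
    by simp
  with arc_diagram_with_sqrt_resolution[OF \<open>c > 0\<close>] show "\<exists>c'>0. ?P c c'"
    by blast
qed

end
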